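(* In $\mathbb{Z}[q,q^{-1}][[x,y]]$, \[ \sum_{i=1}^{\infty}q^i[i]!\,x^iy^i\prod_{j=0}^{i}\frac{1}{q^j-q^j[j+1]x+[j]xy}=\frac{-y}{q(1-x)}+\sum_{i\ge1}\frac{q^{-i^2-i-1}y^i(q^{2i+1}-y)}{q^i-q^i[i+1]x+[i]xy}. \]
   Context: $[m]=1+q+\dots+q^{m-1}$ for $m\ge0$ ($[0]=0$), $[i]!=\prod_{m=1}^i[m]$. Each fraction denotes the inverse of its denominator in $\mathbb{Z}[q,q^{-1}][[x,y]]$ (the denominators have invertible constant term $q^j$). *)

theory Defs
  imports "HOL-Computational_Algebra.Formal_Power_Series"
          "HOL-Computational_Algebra.Formal_Laurent_Series"
begin

text \<open>Coefficient ring: Z[q,q^-1] is embedded injectively into the field of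
  formal Laurent series rat fls in the variable q (q = fls_X).
  The ring R[[x,y]] is realised as (R[[x]])[[y]]: the inner fps variable is x,
  the outer fps variable is y.\<close>

type_synonym coef = "rat fls"
type_synonym ser2 = "coef fps fps"

definition qv :: coef where "qv = fls_X"

definition qint :: "nat \<Rightarrow> coef" where
  "qint m = (\<Sum>k<m. qv ^ k)"

definition qfact :: "nat \<Rightarrow> coef" where
  "qfact i = (\<Prod>m = 1..i. qint m)"

definition C :: "coef \<Rightarrow> ser2" where "C c = fps_const (fps_const c)"
definition X :: ser2 where "X = fps_const fps_X"
definition Y :: ser2 where "Y = fps_X"

definition den :: "nat \<Rightarrow> ser2" where
  "den j = C (qv ^ j) - C (qv ^ j * qint (j + 1)) * X + C (qint j) * X * Y"

definition lhs_term :: "nat \<Rightarrow> ser2" where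
  "lhs_term i = C (qv ^ i * qfact i) * X ^ i * Y ^ i * (\<Prod>j = 0..i. inverse (den j))"

definition rhs_term :: "nat \<Rightarrow> ser2" where
  "rhs_term i = C (inverse (qv ^ (i^2 + i + 1))) * Y ^ i * (C (qv ^ (2*i+1)) - Y)
                * inverse (den i)"

end

theory Submission
  imports Defs
begin

(* Write d_j = den j and, for N >= 0,
     R_N = sum_{k<=N} T_{N,k},   T_{N,k} = q^-(k^2+k+1) [N-k]! x^(N-k) prod_{j=k..N} 1/d_j.
   The (N+1)-st term of the left series minus that of the right series equals
   y^(N+2) R_(N+1) - y^(N+1) R_N.  The key is the shift identity
   d_(m+k) - [m] x y = q^m (d_k - q^(2k+1) [m] x), which makes
   sum_k T_{N,k} (d_(N+1) - [N+1-k] x y) telescope.  Hence the partial sums of the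
   difference of the two series are y^(N+1) R_N - y R_0, and they converge y-adically
   to -y R_0 = -y/(q(1-x)). *)

lemma fps_fps_right_inverse:
  fixes f :: "'a::division_ring fps fps"
  assumes "f $ 0 $ 0 \<noteq> 0"
  shows "f * inverse f = 1"
proof -
  have "f $ 0 * inverse (f $ 0) = 1"
    using assms by (rule inverse_mult_eq_1')
  then show ?thesis
    unfolding fps_inverse_def by (rule fps_right_inverse)
qed

lemma fps_fps_inverse_unique:
  fixes f g :: "'a::field fps fps"
  assumes "f $ 0 $ 0 \<noteq> 0" and "f * g = 1"
  shows "inverse f = g"
proof -
  have "inverse f = inverse f * (f * g)"
    using assms(2) by simp
  also have "\<dots> = (f * inverse f) * g"
    by (simp only: ac_simps)
  also have "\<dots> = g"
    using fps_fps_right_inverse[OF assms(1)] by simp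
  finally show ?thesis .
qed

lemma fps_sums_diff:
  fixes f g :: "nat \<Rightarrow> 'a::ab_group_add fps"
  assumes "f sums s" and "g sums t"
  shows "(\<lambda>i. f i - g i) sums (s - t)"
proof -
  have lim_f: "\<forall>\<^sub>F N in sequentially. (\<Sum>i<N. f i) $ n = s $ n" for n
    using assms(1) unfolding sums_def tendsto_fps_iff by blast
  have lim_g: "\<forall>\<^sub>F N in sequentially. (\<Sum>i<N. g i) $ n = t $ n" for n
    using assms(2) unfolding sums_def tendsto_fps_iff by blast
  have "\<forall>\<^sub>F N in sequentially. (\<Sum>i<N. f i - g i) $ n = (s - t) $ n" for n
    using lim_f[of n] lim_g[of n] by eventually_elim (simp add: sum_subtractf)
  then show ?thesis
    unfolding sums_def by (rule tendsto_fpsI)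
qed

lemma summable_fps_X_power_mult:
  fixes g :: "nat \<Rightarrow> 'a::comm_ring_1 fps"
  shows "summable (\<lambda>i. fps_X ^ i * g i)"
proof -
  have "(\<lambda>i. fps_X ^ i * g i) sums Abs_fps (\<lambda>n. \<Sum>i\<le>n. (fps_X ^ i * g i) $ n)"
    unfolding sums_def
  proof (rule tendsto_fpsI)
    fix n
    have "(\<Sum>i<N. fps_X ^ i * g i) $ n = (\<Sum>i\<le>n. (fps_X ^ i * g i) $ n)" if "n < N" for N
    proof -
      have "(\<Sum>i<N. fps_X ^ i * g i) $ n = (\<Sum>i<N. (fps_X ^ i * g i) $ n)"
        by (rule fps_sum_nth)
      also have "\<dots> = (\<Sum>i\<le>n. (fps_X ^ i * g i) $ n)"
        using that by (intro sum.mono_neutral_right) (auto simp: fps_X_power_mult_nth)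
      finally show ?thesis .
    qed
    then show "\<forall>\<^sub>F N in sequentially.
        (\<Sum>i<N. fps_X ^ i * g i) $ n = Abs_fps (\<lambda>n. \<Sum>i\<le>n. (fps_X ^ i * g i) $ n) $ n"
      unfolding eventually_sequentially by (auto intro!: exI[of _ "Suc n"])
  qed
  then show ?thesis
    by (rule sums_summable)
qed

lemma tendsto_fps_X_power_mult:
  fixes g :: "nat \<Rightarrow> 'a::comm_ring_1 fps"
  shows "(\<lambda>N. c + fps_X ^ N * g N) \<longlonglongrightarrow> c"
proof (rule tendsto_fpsI)
  fix n
  have "(c + fps_X ^ N * g N) $ n = c $ n" if "n < N" for N
    using that by (simp add: fps_X_power_mult_nth)
  then show "\<forall>\<^sub>F N in sequentially. (c + fps_X ^ N * g N) $ n = c $ n"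
    unfolding eventually_sequentially by (auto intro!: exI[of _ "Suc n"])
qed

lemma C_mult: "C (a * b) = C a * C b"
  by (simp add: C_def)

lemma C_add: "C (a + b) = C a + C b"
  by (simp add: C_def)

lemma C_1: "C 1 = 1"
  by (simp add: C_def)

lemma qv_nonzero: "qv \<noteq> 0"
  by (simp add: qv_def)

lemma qv_powi_add: "qv powi (a + b) = qv powi a * qv powi b"
  by (simp add: power_int_add qv_nonzero)

lemma qint_add: "qint (a + b) = qint a + qv ^ a * qint b"
  by (induction b) (simp_all add: qint_def algebra_simps power_add)

lemma qfact_Suc: "qfact (Suc n) = qfact n * qint (Suc n)"
  by (simp add: qfact_def)

lemma den_mult_inverse: "den j * inverse (den j) = 1"
  by (rule fps_fps_right_inverse) (simp add: den_def C_def X_def Y_def qv_nonzero)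

lemma den_shift:
  "den (m + k) - Y * C (qint m) * X = C (qv ^ m) * (den k - C (qv ^ (2 * k + 1) * qint m) * X)"
proof -
  have qint_shift: "qint (m + k + 1) = qint (k + 1) + qv ^ (k + 1) * qint m"
    using qint_add[of "k + 1" m] by (simp add: ac_simps)
  have qv_odd: "qv ^ (2 * k + 1) = qv ^ k * qv ^ k * qv"
    by (simp add: mult_2 power_add)
  have "qv ^ (m + k) * qint (m + k + 1)
      = qv ^ m * (qv ^ k * qint (k + 1)) + qv ^ m * (qv ^ (2 * k + 1) * qint m)"
    unfolding qint_shift qv_odd by (simp add: algebra_simps power_add)
  moreover have "qint (m + k) = qint m + qv ^ m * qint k"
    by (rule qint_add)
  ultimately show ?thesis
    unfolding den_def by (simp add: power_add C_mult C_add algebra_simps)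
qed

definition remainder_term :: "nat \<Rightarrow> nat \<Rightarrow> ser2" where
  "remainder_term N k = C (qv powi - int (k\<^sup>2 + k + 1) * qfact (N - k)) * X ^ (N - k)
     * (\<Prod>j = k..N. inverse (den j))"

definition remainder :: "nat \<Rightarrow> ser2" where
  "remainder N = (\<Sum>k\<le>N. remainder_term N k)"

(* On k < N, tele_term N is an antidifference of
   k |-> remainder_term N k * (den (N + 1) - [N + 1 - k] x y). *)
definition tele_term :: "nat \<Rightarrow> nat \<Rightarrow> ser2" where
  "tele_term N k = C (qv powi (int N + int k + 2) * qint (Suc N - k)) * X * remainder_term N k"

lemma remainder_term_Suc:
  assumes "k \<le> N"
  shows "remainder_term (Suc N) k
    = remainder_term N k * C (qint (Suc N - k)) * X * inverse (den (Suc N))"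
proof -
  have "Suc N - k = Suc (N - k)"
    using assms by simp
  moreover have "(\<Prod>j = k..Suc N. inverse (den j)) = (\<Prod>j = k..N. inverse (den j)) * inverse (den (Suc N))"
    using assms by (simp add: prod.cl_ivl_Suc)
  ultimately show ?thesis
    unfolding remainder_term_def by (simp add: qfact_Suc C_mult algebra_simps)
qed

lemma remainder_term_mult_den:
  assumes "k < N"
  shows "remainder_term N k * den k
    = C (qv powi (2 * int k + 2) * qint (N - k)) * X * remainder_term N (Suc k)"
proof -
  have "N - k = Suc (N - Suc k)"
    using assms by simp
  moreover have "(\<Prod>j = k..N. inverse (den j)) = inverse (den k) * (\<Prod>j = Suc k..N. inverse (den j))"
    using assms by (simp add: prod.atLeast_Suc_atMost)
  moreover have "qv powi - int (k\<^sup>2 + k + 1)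
      = qv powi (2 * int k + 2) * qv powi - int ((Suc k)\<^sup>2 + Suc k + 1)"
    unfolding qv_powi_add[symmetric] by (simp add: power2_eq_square algebra_simps)
  ultimately show ?thesis
    unfolding remainder_term_def
    by (simp add: qfact_Suc C_mult algebra_simps den_mult_inverse)
qed

lemma remainder_term_diag_mult_den:
  "remainder_term N N * den N = C (qv powi - int (N\<^sup>2 + N + 1))"
  using den_mult_inverse[of N] by (simp add: remainder_term_def qfact_def C_1 ac_simps)

lemma remainder_term_mult_den_shift:
  assumes "k \<le> N"
  shows "remainder_term N k * (den (Suc N) - Y * C (qint (Suc N - k)) * X)
    = C (qv ^ (Suc N - k)) * (remainder_term N k * den k) - tele_term N k"
proof -
  have "qv ^ (Suc N - k) * qv ^ (2 * k + 1) = qv powi (int N + int k + 2)"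
    unfolding power_int_of_nat[symmetric] qv_powi_add[symmetric]
    using assms by (intro arg_cong[where f = "power_int qv"]) (simp add: of_nat_diff)
  then have exp: "qv ^ (Suc N - k) * (qv ^ (2 * k + 1) * qint (Suc N - k))
      = qv powi (int N + int k + 2) * qint (Suc N - k)"
    by (simp add: mult.assoc[symmetric])
  have "remainder_term N k * (den (Suc N) - Y * C (qint (Suc N - k)) * X)
      = remainder_term N k * (den ((Suc N - k) + k) - Y * C (qint (Suc N - k)) * X)"
    using assms by simp
  also have "\<dots> = remainder_term N k
      * (C (qv ^ (Suc N - k)) * (den k - C (qv ^ (2 * k + 1) * qint (Suc N - k)) * X))"
    by (simp only: den_shift)
  also have "\<dots> = C (qv ^ (Suc N - k)) * (remainder_term N k * den k)
      - C (qv ^ (Suc N - k) * (qv ^ (2 * k + 1) * qint (Suc N - k))) * X * remainder_term N k"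
    by (simp add: C_mult algebra_simps)
  finally show ?thesis
    unfolding exp tele_term_def .
qed

lemma remainder_telescope:
  "den (Suc N) * remainder N - Y * (\<Sum>k\<le>N. remainder_term N k * C (qint (Suc N - k))) * X
    = C (qv powi - int (N\<^sup>2 + N)) - tele_term N 0"
proof -
  define g where "g k = remainder_term N k * (den (Suc N) - Y * C (qint (Suc N - k)) * X)" for k
  have g_less: "g k = tele_term N (Suc k) - tele_term N k" if "k < N" for k
  proof -
    have "qv ^ (Suc N - k) * qv powi (2 * int k + 2) = qv powi (int N + int (Suc k) + 2)"
      unfolding power_int_of_nat[symmetric] qv_powi_add[symmetric]
      using that by (intro arg_cong[where f = "power_int qv"]) (simp add: of_nat_diff)
    then have "C (qv ^ (Suc N - k)) * (C (qv powi (2 * int k + 2) * qint (N - k)) * X * remainder_term N (Suc k))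
        = tele_term N (Suc k)"
      unfolding tele_term_def by (simp add: C_mult[symmetric] mult.assoc[symmetric])
    then show ?thesis
      using that unfolding g_def
      by (simp add: remainder_term_mult_den_shift remainder_term_mult_den)
  qed
  have "qv ^ (Suc N - N) * qv powi - int (N\<^sup>2 + N + 1) = qv powi - int (N\<^sup>2 + N)"
    unfolding power_int_of_nat[symmetric] qv_powi_add[symmetric]
    by (intro arg_cong[where f = "power_int qv"]) simp
  then have g_diag: "g N = C (qv powi - int (N\<^sup>2 + N)) - tele_term N N"
    unfolding g_def remainder_term_mult_den_shift[OF order_refl] remainder_term_diag_mult_den
    by (simp add: C_mult[symmetric])
  have "(\<Sum>k\<le>N. g k) = (\<Sum>k<N. tele_term N (Suc k) - tele_term N k) + g N"
    by (simp add: lessThan_Suc_atMost[symmetric] g_less)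
  also have "\<dots> = C (qv powi - int (N\<^sup>2 + N)) - tele_term N 0"
    by (simp add: sum_lessThan_telescope g_diag)
  finally show ?thesis
    unfolding g_def remainder_def
    by (simp add: sum_subtractf sum_distrib_left sum_distrib_right algebra_simps)
qed

lemma remainder_Suc:
  "remainder (Suc N) = ((\<Sum>k\<le>N. remainder_term N k * C (qint (Suc N - k))) * X
     + C (qv powi - int ((Suc N)\<^sup>2 + Suc N + 1))) * inverse (den (Suc N))"
proof -
  have "remainder (Suc N) = (\<Sum>k\<le>N. remainder_term (Suc N) k) + remainder_term (Suc N) (Suc N)"
    by (simp add: remainder_def)
  also have "(\<Sum>k\<le>N. remainder_term (Suc N) k)
      = (\<Sum>k\<le>N. remainder_term N k * C (qint (Suc N - k))) * X * inverse (den (Suc N))"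
    by (simp add: remainder_term_Suc sum_distrib_right)
  also have "remainder_term (Suc N) (Suc N)
      = C (qv powi - int ((Suc N)\<^sup>2 + Suc N + 1)) * inverse (den (Suc N))"
    by (simp add: remainder_term_def qfact_def)
  finally show ?thesis
    by (simp add: algebra_simps)
qed

lemma lhs_term_Suc:
  "lhs_term (Suc N) = Y ^ Suc N * inverse (den (Suc N)) * tele_term N 0"
proof -
  have "qv powi (int N + 2) * qint (Suc N) * (qv powi - 1 * qfact N) = qv ^ Suc N * qfact (Suc N)"
  proof -
    have "qv powi (int N + 2) * qv powi - 1 = qv ^ Suc N"
      unfolding power_int_of_nat[symmetric] qv_powi_add[symmetric]
      by (intro arg_cong[where f = "power_int qv"]) simp
    then show ?thesis
      by (simp add: qfact_Suc algebra_simps)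
  qed
  then show ?thesis
    unfolding lhs_term_def tele_term_def remainder_term_def
    by (simp add: prod.atLeast0_atMost_Suc C_mult[symmetric] algebra_simps)
qed

lemma rhs_term_Suc:
  "rhs_term (Suc N) = Y ^ Suc N * inverse (den (Suc N))
     * (C (qv powi - int (N\<^sup>2 + N)) - Y * C (qv powi - int ((Suc N)\<^sup>2 + Suc N + 1)))"
proof -
  have inv: "inverse (qv ^ n) = qv powi - int n" for n
    by (simp add: power_int_minus)
  have "inverse (qv ^ ((Suc N)\<^sup>2 + Suc N + 1)) * qv ^ (2 * Suc N + 1) = qv powi - int (N\<^sup>2 + N)"
    unfolding inv unfolding power_int_of_nat[symmetric] qv_powi_add[symmetric]
    by (intro arg_cong[where f = "power_int qv"]) (simp add: power2_eq_square algebra_simps)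
  moreover have "rhs_term (Suc N) = Y ^ Suc N * inverse (den (Suc N))
     * (C (inverse (qv ^ ((Suc N)\<^sup>2 + Suc N + 1)) * qv ^ (2 * Suc N + 1))
        - Y * C (inverse (qv ^ ((Suc N)\<^sup>2 + Suc N + 1))))"
    unfolding rhs_term_def C_mult by (simp add: algebra_simps)
  ultimately show ?thesis
    unfolding inv by simp
qed

lemma lhs_term_Suc_diff_rhs_term_Suc:
  "lhs_term (Suc N) - rhs_term (Suc N) = Y ^ Suc (Suc N) * remainder (Suc N) - Y ^ Suc N * remainder N"
proof -
  define d where "d = den (Suc N)"
  define \<sigma> where "\<sigma> = (\<Sum>k\<le>N. remainder_term N k * C (qint (Suc N - k))) * X"
  define c where "c = C (qv powi - int ((Suc N)\<^sup>2 + Suc N + 1))"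
  have tele: "tele_term N 0 - C (qv powi - int (N\<^sup>2 + N)) = Y * \<sigma> - d * remainder N"
    using remainder_telescope[of N] unfolding d_def \<sigma>_def by (simp add: algebra_simps)
  have "lhs_term (Suc N) - rhs_term (Suc N)
      = Y ^ Suc N * inverse d * (tele_term N 0 - C (qv powi - int (N\<^sup>2 + N)) + Y * c)"
    unfolding lhs_term_Suc rhs_term_Suc d_def c_def by (simp add: algebra_simps)
  also have "\<dots> = Y ^ Suc (Suc N) * ((\<sigma> + c) * inverse d) - Y ^ Suc N * (d * inverse d) * remainder N"
    unfolding tele by (simp add: algebra_simps)
  finally show ?thesis
    unfolding remainder_Suc d_def \<sigma>_def c_def den_mult_inverse by simp
qed

lemma remainder_0: "remainder 0 = inverse (C qv * (1 - X))"
proof (rule fps_fps_inverse_unique[symmetric])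
  show "(C qv * (1 - X)) $ 0 $ 0 \<noteq> 0"
    by (simp add: C_def X_def qv_nonzero)
  have "den 0 = 1 - X"
    by (simp add: den_def qint_def C_def)
  then have "C qv * (1 - X) * remainder 0 = C (qv * qv powi - 1) * (den 0 * inverse (den 0))"
    by (simp add: remainder_def remainder_term_def qfact_def C_mult ac_simps)
  then show "C qv * (1 - X) * remainder 0 = 1"
    by (simp add: den_mult_inverse power_int_minus qv_nonzero C_1)
qed

lemma summable_lhs_term_Suc: "summable (\<lambda>i. lhs_term (Suc i))"
  using summable_fps_X_power_mult[of "\<lambda>i. Y * inverse (den (Suc i)) * tele_term i 0"]
  by (simp add: lhs_term_Suc Y_def algebra_simps)

lemma summable_rhs_term_Suc: "summable (\<lambda>i. rhs_term (Suc i))"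
  using summable_fps_X_power_mult[of "\<lambda>i. Y * inverse (den (Suc i))
    * (C (qv powi - int (i\<^sup>2 + i)) - Y * C (qv powi - int ((Suc i)\<^sup>2 + Suc i + 1)))"]
  by (simp add: rhs_term_Suc Y_def algebra_simps)

lemma sum_lhs_term_Suc_diff_rhs_term_Suc:
  "(\<Sum>i<N. lhs_term (Suc i) - rhs_term (Suc i)) = - Y * remainder 0 + fps_X ^ N * (Y * remainder N)"
  unfolding lhs_term_Suc_diff_rhs_term_Suc
    sum_lessThan_telescope[where f = "\<lambda>n. Y ^ Suc n * remainder n"]
  by (simp add: Y_def algebra_simps)

theorem mainTheorem6:
  shows "summable (\<lambda>i. lhs_term (Suc i)) \<and> summable (\<lambda>i. rhs_term (Suc i)) \<and>
         (\<Sum>i. lhs_term (Suc i)) =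
           - Y * inverse (C qv * (1 - X)) + (\<Sum>i. rhs_term (Suc i))"
proof -
  have "(\<lambda>i. lhs_term (Suc i) - rhs_term (Suc i)) sums (- Y * remainder 0)"
    unfolding sums_def sum_lhs_term_Suc_diff_rhs_term_Suc by (rule tendsto_fps_X_power_mult)
  moreover have "(\<lambda>i. lhs_term (Suc i) - rhs_term (Suc i))
      sums ((\<Sum>i. lhs_term (Suc i)) - (\<Sum>i. rhs_term (Suc i)))"
    using summable_lhs_term_Suc summable_rhs_term_Suc by (intro fps_sums_diff summable_sums)
  ultimately have "(\<Sum>i. lhs_term (Suc i)) - (\<Sum>i. rhs_term (Suc i)) = - Y * remainder 0"
    by (rule sums_unique2[symmetric])
  then show ?thesis
    using summable_lhs_term_Suc summable_rhs_term_Suc unfolding remainder_0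
    by (simp add: algebra_simps)
qed

end
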